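(* Let $\alpha,\beta,\gamma>-1$ and $n\in\{0,1,2,\dots\}$. Then: (1) $P_{0,n}^{(\alpha,\beta,\gamma)}(x,y)\in\mathcal V_n^2(W_{\alpha,\beta,\gamma})$ and its restriction to the line $x=0$ is $J_n^{(\gamma,\beta)}(y)$; (2) $P_{0,n}^{(\beta,\alpha,\gamma)}(y,x)\in\mathcal V_n^2(W_{\alpha,\beta,\gamma})$ and its restriction to the line $y=0$ is $J_n^{(\gamma,\alpha)}(x)$; (3) $P_{0,n}^{(\gamma,\beta,\alpha)}(1-x-y,y)\in\mathcal V_n^2(W_{\alpha,\beta,\gamma})$ and its restriction to the line $x+y=1$ is $J_n^{(\alpha,\beta)}(y)$.
   Context: $T^2=\{(x,y):x\ge0,y\ge0,1-x-y\ge0\}$ and $W_{a,b,c}(x,y)=x^a y^b(1-x-y)^c$. For $a,b,c>-1$, $\mathcal V_n^2(W_{a,b,c})$ is the space of polynomials $P$ of total degree $n$ in $(x,y)$ with $\int_{T^2}P\,Q\,W_{a,b,c}\,dx\,dy=0$ for all polynomials $Q$ of degree at most $n-1$. For $0\le k\le n$, $P_{k,n}^{(a,b,c)}(x,y)=[W_{a,b,c}(x,y)]^{-1}\frac{\partial^n}{\partial x^k\partial y^{n-k}}\big[x^{a+k}y^{b+n-k}(1-x-y)^{c+n}\big]$. The Jacobi polynomials on $[0,1]$ are $J_n^{(a,b)}(t)=(1-t)^{-a}t^{-b}\frac{d^n}{dt^n}\big[(1-t)^{n+a}t^{n+b}\big]$. *)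

theory Defs
  imports "HOL-Analysis.Analysis"
begin

definition tri :: "(real \<times> real) set" where
  "tri = {(x, y). x \<ge> 0 \<and> y \<ge> 0 \<and> 1 - x - y \<ge> 0}"

definition tri_int :: "(real \<times> real) set" where
  "tri_int = {(x, y). x > 0 \<and> y > 0 \<and> 1 - x - y > 0}"

definition W :: "real \<Rightarrow> real \<Rightarrow> real \<Rightarrow> real \<times> real \<Rightarrow> real" where
  "W a b c = (\<lambda>(x, y). x powr a * y powr b * (1 - x - y) powr c)"

definition is_poly2 :: "nat \<Rightarrow> (real \<times> real \<Rightarrow> real) \<Rightarrow> bool" where
  "is_poly2 n p \<longleftrightarrow> (\<exists>c :: nat \<Rightarrow> nat \<Rightarrow> real.
      \<forall>x y. p (x, y) = (\<Sum>i\<le>n. \<Sum>j\<le>n - i. c i j * x ^ i * y ^ j))"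

definition in_V2 :: "real \<Rightarrow> real \<Rightarrow> real \<Rightarrow> nat \<Rightarrow> (real \<times> real \<Rightarrow> real) \<Rightarrow> bool" where
  "in_V2 a b c n p \<longleftrightarrow> is_poly2 n p \<and>
     (\<forall>m Q. m < n \<longrightarrow> is_poly2 m Q \<longrightarrow>
        ((\<lambda>z. p z * Q z * W a b c z) has_integral 0) tri)"

definition pdx :: "(real \<times> real \<Rightarrow> real) \<Rightarrow> real \<times> real \<Rightarrow> real" where
  "pdx f = (\<lambda>(x, y). deriv (\<lambda>t. f (t, y)) x)"

definition pdy :: "(real \<times> real \<Rightarrow> real) \<Rightarrow> real \<times> real \<Rightarrow> real" where
  "pdy f = (\<lambda>(x, y). deriv (\<lambda>t. f (x, t)) y)"

definition Ptri :: "real \<Rightarrow> real \<Rightarrow> real \<Rightarrow> nat \<Rightarrow> nat \<Rightarrow> real \<times> real \<Rightarrow> real" where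
  "Ptri a b c k n = (\<lambda>z. ((pdx ^^ k) ((pdy ^^ (n - k))
      (\<lambda>(x, y). x powr (a + real k) * y powr (b + real n - real k)
                 * (1 - x - y) powr (c + real n)))) z / W a b c z)"

definition Jac :: "nat \<Rightarrow> real \<Rightarrow> real \<Rightarrow> real \<Rightarrow> real" where
  "Jac n a b t = (1 - t) powr (- a) * t powr (- b) *
     (deriv ^^ n) (\<lambda>s. (1 - s) powr (real n + a) * s powr (real n + b)) t"

end

theory Submission
  imports Defs "HOL-Computational_Algebra.Polynomial"
begin

text \<open>On a vertical segment \<open>{x} \<times> [0, s]\<close>, \<open>s = 1 - x\<close>, the function \<open>P_{0,n}\<close> is a
  one-variable Rodrigues expression \<open>y^-b (s-y)^-c (d/dy)^n [y^(b+n) (s-y)^(c+n)]\<close>. Expanding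
  the n-th derivative shows that it is a polynomial of degree n in \<open>y\<close> and \<open>s - y\<close>, which at
  \<open>x = 0\<close> is the Jacobi polynomial. Integrating n times by parts in \<open>y\<close> kills every polynomial
  of degree less than n in \<open>y\<close>, so by Fubini \<open>P_{0,n}\<close> is orthogonal to all polynomials of
  lower total degree. Parts (2) and (3) follow from (1): the maps \<open>(x, y) \<mapsto> (y, x)\<close> and
  \<open>(x, y) \<mapsto> (1 - x - y, y)\<close> are measure-preserving involutions of the triangle that preserve
  total degree and permute the exponents of the weight.\<close>

section \<open>Bivariate polynomials\<close>

lemma is_poly2_iff:
  "is_poly2 n p \<longleftrightarrow> (\<exists>c. \<forall>z. p z = (\<Sum>i\<le>n. \<Sum>j\<le>n - i. c i j * fst z ^ i * snd z ^ j))"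
  unfolding is_poly2_def by auto

lemma is_poly2_zero: "is_poly2 n (\<lambda>_. 0)"
  unfolding is_poly2_def by (rule exI[of _ "\<lambda>i j. 0"]) simp

lemma is_poly2_const: "is_poly2 0 (\<lambda>_. r)"
  unfolding is_poly2_def by (rule exI[of _ "\<lambda>i j. r"]) simp

lemma is_poly2_add: "is_poly2 n p \<Longrightarrow> is_poly2 n q \<Longrightarrow> is_poly2 n (\<lambda>z. p z + q z)"
  unfolding is_poly2_def
proof (elim exE)
  fix c d
  assume "\<forall>x y. p (x, y) = (\<Sum>i\<le>n. \<Sum>j\<le>n - i. c i j * x ^ i * y ^ j)"
    and "\<forall>x y. q (x, y) = (\<Sum>i\<le>n. \<Sum>j\<le>n - i. d i j * x ^ i * y ^ j)"
  then show "\<exists>e. \<forall>x y. p (x, y) + q (x, y) = (\<Sum>i\<le>n. \<Sum>j\<le>n - i. e i j * x ^ i * y ^ j)"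
    by (intro exI[of _ "\<lambda>i j. c i j + d i j"]) (simp add: sum.distrib algebra_simps)
qed

lemma is_poly2_cmult: "is_poly2 n p \<Longrightarrow> is_poly2 n (\<lambda>z. r * p z)"
  unfolding is_poly2_def
proof (elim exE)
  fix c assume "\<forall>x y. p (x, y) = (\<Sum>i\<le>n. \<Sum>j\<le>n - i. c i j * x ^ i * y ^ j)"
  then show "\<exists>e. \<forall>x y. r * p (x, y) = (\<Sum>i\<le>n. \<Sum>j\<le>n - i. e i j * x ^ i * y ^ j)"
    by (intro exI[of _ "\<lambda>i j. r * c i j"]) (simp add: sum_distrib_left algebra_simps)
qed

lemma is_poly2_sum:
  "finite S \<Longrightarrow> (\<And>k. k \<in> S \<Longrightarrow> is_poly2 n (f k)) \<Longrightarrow> is_poly2 n (\<lambda>z. \<Sum>k\<in>S. f k z)"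
  by (induction S rule: finite_induct) (simp_all add: is_poly2_zero is_poly2_add)

lemma is_poly2_mono:
  assumes "is_poly2 m p" "m \<le> n"
  shows "is_poly2 n p"
proof -
  from assms(1) obtain c where c: "\<And>x y. p (x, y) = (\<Sum>i\<le>m. \<Sum>j\<le>m - i. c i j * x ^ i * y ^ j)"
    unfolding is_poly2_def by blast
  define d where "d i j = (if i + j \<le> m then c i j else 0)" for i j
  have triangle_sum: "(\<Sum>i\<le>k. \<Sum>j\<le>k - i. f i j) = (\<Sum>(i, j)\<in>Sigma {..k} (\<lambda>i. {..k - i}). f i j)"
    for k :: nat and f :: "nat \<Rightarrow> nat \<Rightarrow> real"
    by (rule sum.Sigma) auto
  have "p (x, y) = (\<Sum>i\<le>n. \<Sum>j\<le>n - i. d i j * x ^ i * y ^ j)" for x y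
  proof -
    have "p (x, y) = (\<Sum>(i, j)\<in>Sigma {..m} (\<lambda>i. {..m - i}). d i j * x ^ i * y ^ j)"
      unfolding c triangle_sum by (rule sum.cong) (auto simp: d_def)
    also have "\<dots> = (\<Sum>(i, j)\<in>Sigma {..n} (\<lambda>i. {..n - i}). d i j * x ^ i * y ^ j)"
      by (rule sum.mono_neutral_left) (use assms(2) in \<open>auto simp: d_def split: if_splits\<close>)
    finally show ?thesis unfolding triangle_sum .
  qed
  then show ?thesis unfolding is_poly2_def by blast
qed

lemma is_poly2_fst_mult: "is_poly2 n p \<Longrightarrow> is_poly2 (Suc n) (\<lambda>z. fst z * p z)"
  unfolding is_poly2_def
proof (elim exE)
  fix c assume c: "\<forall>x y. p (x, y) = (\<Sum>i\<le>n. \<Sum>j\<le>n - i. c i j * x ^ i * y ^ j)"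
  define d where "d i j = (if i = 0 then 0 else c (i - 1) j)" for i j
  have "x * p (x, y) = (\<Sum>i\<le>Suc n. \<Sum>j\<le>Suc n - i. d i j * x ^ i * y ^ j)" for x y
    unfolding sum.atMost_Suc_shift by (simp add: c d_def sum_distrib_left algebra_simps)
  then show "\<exists>e. \<forall>x y. fst (x, y) * p (x, y) = (\<Sum>i\<le>Suc n. \<Sum>j\<le>Suc n - i. e i j * x ^ i * y ^ j)"
    by auto
qed

lemma is_poly2_snd_mult: "is_poly2 n p \<Longrightarrow> is_poly2 (Suc n) (\<lambda>z. snd z * p z)"
  unfolding is_poly2_def
proof (elim exE)
  fix c assume c: "\<forall>x y. p (x, y) = (\<Sum>i\<le>n. \<Sum>j\<le>n - i. c i j * x ^ i * y ^ j)"
  define d where "d i j = (if j = 0 then 0 else c i (j - 1))" for i j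
  have "y * p (x, y) = (\<Sum>i\<le>Suc n. \<Sum>j\<le>Suc n - i. d i j * x ^ i * y ^ j)" for x y
  proof -
    have "(\<Sum>i\<le>Suc n. \<Sum>j\<le>Suc n - i. d i j * x ^ i * y ^ j)
        = (\<Sum>i\<le>n. \<Sum>j\<le>Suc (n - i). d i j * x ^ i * y ^ j)"
      by (simp add: d_def Suc_diff_le)
    also have "\<dots> = (\<Sum>i\<le>n. \<Sum>j\<le>n - i. c i j * x ^ i * y ^ Suc j)"
      by (rule sum.cong[OF refl], subst sum.atMost_Suc_shift) (simp add: d_def del: sum.atMost_Suc)
    also have "\<dots> = y * p (x, y)"
      by (simp add: c sum_distrib_left algebra_simps)
    finally show ?thesis by simp
  qed
  then show "\<exists>e. \<forall>x y. snd (x, y) * p (x, y) = (\<Sum>i\<le>Suc n. \<Sum>j\<le>Suc n - i. e i j * x ^ i * y ^ j)"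
    by auto
qed

lemma is_poly2_monomial_mult:
  assumes "is_poly2 n p"
  shows "is_poly2 (i + j + n) (\<lambda>z. fst z ^ i * snd z ^ j * p z)"
proof -
  have "is_poly2 (j + n) (\<lambda>z. snd z ^ j * p z)"
    by (induction j) (simp_all add: assms mult.assoc is_poly2_snd_mult)
  then have "is_poly2 (i + (j + n)) (\<lambda>z. fst z ^ i * (snd z ^ j * p z))"
    by (induction i) (simp_all add: mult.assoc is_poly2_fst_mult)
  then show ?thesis by (simp add: mult.assoc add.assoc)
qed

lemma is_poly2_mult:
  assumes p: "is_poly2 m p" and q: "is_poly2 n q"
  shows "is_poly2 (m + n) (\<lambda>z. p z * q z)"
proof -
  from p obtain c where c: "\<And>z. p z = (\<Sum>i\<le>m. \<Sum>j\<le>m - i. c i j * fst z ^ i * snd z ^ j)"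
    unfolding is_poly2_iff by blast
  have "is_poly2 (m + n) (\<lambda>z. \<Sum>i\<le>m. \<Sum>j\<le>m - i. c i j * (fst z ^ i * snd z ^ j * q z))"
  proof (intro is_poly2_sum is_poly2_cmult finite_atMost)
    fix i j assume "i \<in> {..m}" "j \<in> {..m - i}"
    then show "is_poly2 (m + n) (\<lambda>z. fst z ^ i * snd z ^ j * q z)"
      by (intro is_poly2_mono[OF is_poly2_monomial_mult[OF q]]) auto
  qed
  moreover have "(\<lambda>z. \<Sum>i\<le>m. \<Sum>j\<le>m - i. c i j * (fst z ^ i * snd z ^ j * q z)) = (\<lambda>z. p z * q z)"
    unfolding c by (simp add: sum_distrib_right mult.assoc)
  ultimately show ?thesis by simp
qed

lemma is_poly2_power:
  assumes "is_poly2 1 p"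
  shows "is_poly2 k (\<lambda>z. p z ^ k)"
proof (induction k)
  case 0
  then show ?case using is_poly2_const[of 1] by simp
next
  case (Suc k)
  then show ?case using is_poly2_mult[OF assms Suc.IH] by simp
qed

lemma is_poly2_fst: "is_poly2 1 fst"
  using is_poly2_fst_mult[OF is_poly2_const[of 1]] by simp

lemma is_poly2_snd: "is_poly2 1 snd"
  using is_poly2_snd_mult[OF is_poly2_const[of 1]] by simp

lemma is_poly2_one_minus_fst_snd: "is_poly2 1 (\<lambda>z. 1 - fst z - snd z)"
  using is_poly2_add[OF is_poly2_add[OF is_poly2_mono[OF is_poly2_const[of 1]]
      is_poly2_cmult[OF is_poly2_fst, of "-1"]] is_poly2_cmult[OF is_poly2_snd, of "-1"]]
  by simp

lemma is_poly2_compose: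
  assumes p: "is_poly2 n p" and f: "is_poly2 1 f" and g: "is_poly2 1 g"
  shows "is_poly2 n (\<lambda>z. p (f z, g z))"
proof -
  from p obtain c where c: "\<And>x y. p (x, y) = (\<Sum>i\<le>n. \<Sum>j\<le>n - i. c i j * x ^ i * y ^ j)"
    unfolding is_poly2_def by blast
  have "is_poly2 n (\<lambda>z. \<Sum>i\<le>n. \<Sum>j\<le>n - i. c i j * (f z ^ i * g z ^ j))"
  proof (intro is_poly2_sum is_poly2_cmult finite_atMost)
    fix i j assume "i \<in> {..n}" "j \<in> {..n - i}"
    then show "is_poly2 n (\<lambda>z. f z ^ i * g z ^ j)"
      by (intro is_poly2_mono[OF is_poly2_mult[OF is_poly2_power[OF f] is_poly2_power[OF g]]]) auto
  qed
  then show ?thesis by (simp add: c mult.assoc)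
qed

lemma continuous_on_is_poly2: "is_poly2 n p \<Longrightarrow> continuous_on S p"
proof -
  assume "is_poly2 n p"
  then obtain c where "\<And>z. p z = (\<Sum>i\<le>n. \<Sum>j\<le>n - i. c i j * fst z ^ i * snd z ^ j)"
    unfolding is_poly2_iff by blast
  then have p: "p = (\<lambda>z. \<Sum>i\<le>n. \<Sum>j\<le>n - i. c i j * fst z ^ i * snd z ^ j)"
    by auto
  show "continuous_on S p" unfolding p by (intro continuous_intros)
qed

lemma is_poly2_slice:
  assumes "is_poly2 n p"
  obtains q where "degree q \<le> n" "\<And>y. p (x, y) = poly q y"
proof -
  from assms obtain c where c: "\<And>x y. p (x, y) = (\<Sum>i\<le>n. \<Sum>j\<le>n - i. c i j * x ^ i * y ^ j)"
    unfolding is_poly2_def by blast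
  let ?q = "\<Sum>i\<le>n. \<Sum>j\<le>n - i. monom (c i j * x ^ i) j"
  have "degree ?q \<le> n"
    by (intro degree_sum_le finite_atMost order.trans[OF degree_monom_le]) auto
  moreover have "p (x, y) = poly ?q y" for y
    by (simp add: c poly_sum poly_monom)
  ultimately show ?thesis by (rule that)
qed

section \<open>Rodrigues derivatives in one variable\<close>

lemma higher_pderiv_eq_0:
  fixes q :: "'a::{comm_semiring_1, semiring_no_zero_divisors} poly"
  shows "degree q < n \<Longrightarrow> (pderiv ^^ n) q = 0"
  by (intro poly_eqI) (simp add: coeff_higher_pderiv coeff_eq_0)

lemma higher_deriv_eq_on_interval:
  assumes "\<And>t. t \<in> {lo<..<hi} \<Longrightarrow> g t = h 0 t"
    and "\<And>i t. t \<in> {lo<..<hi} \<Longrightarrow> (h i has_real_derivative h (Suc i) t) (at t)"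
    and "t \<in> {lo<..<hi}"
  shows "(deriv ^^ i) g t = h i t"
  using assms(3)
proof (induction i arbitrary: t)
  case 0
  then show ?case using assms(1) by simp
next
  case (Suc i)
  have "((deriv ^^ i) g has_real_derivative h (Suc i) t) (at t)"
    by (rule has_field_derivative_transform_within_open[OF assms(2)[OF Suc.prems]
          open_greaterThanLessThan Suc.prems]) (simp add: Suc.IH)
  then show ?case by (simp add: DERIV_imp_deriv)
qed

lemma pdy_apply: "pdy g (x, t) = deriv (\<lambda>t. g (x, t)) t"
  by (simp add: pdy_def)

lemma funpow_pdy_eq: "(pdy ^^ i) f (x, t) = (deriv ^^ i) (\<lambda>t. f (x, t)) t"
proof (induction i arbitrary: t)
  case (Suc i)
  then have "(\<lambda>t. (pdy ^^ i) f (x, t)) = (deriv ^^ i) (\<lambda>t. f (x, t))" by auto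
  then show ?case by (simp add: pdy_apply)
qed simp

text \<open>The i-th derivative of \<open>y powr A * (s - y) powr C\<close> on \<open>0 < y < s\<close>, expanded in the
  functions \<open>y powr (A - k) * (s - y) powr (C - i + k)\<close>; the recursion for the coefficients
  is the product rule.\<close>

fun rodrigues_coeff :: "real \<Rightarrow> real \<Rightarrow> nat \<Rightarrow> nat \<Rightarrow> real" where
  "rodrigues_coeff A C 0 k = (if k = 0 then 1 else 0)"
| "rodrigues_coeff A C (Suc i) k =
     (if k = 0 then 0 else rodrigues_coeff A C i (k - 1) * (A - real (k - 1)))
     - rodrigues_coeff A C i k * (C - real i + real k)"

definition rodrigues_deriv :: "real \<Rightarrow> real \<Rightarrow> real \<Rightarrow> nat \<Rightarrow> real \<Rightarrow> real" where
  "rodrigues_deriv A C s i y =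
     (\<Sum>k\<le>i. rodrigues_coeff A C i k * (y powr (A - real k) * (s - y) powr (C - real i + real k)))"

lemma rodrigues_coeff_eq_0: "i < k \<Longrightarrow> rodrigues_coeff A C i k = 0"
  by (induction i arbitrary: k) auto

lemma rodrigues_deriv_0: "rodrigues_deriv A C s 0 y = y powr A * (s - y) powr C"
  by (simp add: rodrigues_deriv_def)

lemma has_real_derivative_powr_mult_powr:
  assumes "0 < y" "y < s"
  shows "((\<lambda>y. y powr p * (s - y) powr q) has_real_derivative
     p * y powr (p - 1) * (s - y) powr q - q * y powr p * (s - y) powr (q - 1)) (at y)"
proof -
  have "((\<lambda>y. y powr p) has_real_derivative p * y powr (p - 1)) (at y)"
    by (rule has_real_derivative_powr) (use assms in simp)
  moreover have "((\<lambda>y. (s - y) powr q) has_real_derivative q * (s - y) powr (q - 1) * (0 - 1)) (at y)"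
    using DERIV_chain2[OF has_real_derivative_powr[of "s - y" q] DERIV_diff[OF DERIV_const DERIV_ident]]
      assms by simp
  ultimately show ?thesis
    by (rule DERIV_cong[OF DERIV_mult]) (simp add: algebra_simps)
qed

lemma rodrigues_deriv_has_real_derivative:
  assumes "0 < y" "y < s"
  shows "(rodrigues_deriv A C s i has_real_derivative rodrigues_deriv A C s (Suc i) y) (at y)"
proof -
  let ?c = "rodrigues_coeff A C i"
  let ?e = "\<lambda>k j. y powr (A - real k) * (s - y) powr (C - real j + real k)"
  have "(rodrigues_deriv A C s i has_real_derivative
      (\<Sum>k\<le>i. ?c k * ((A - real k) * y powr (A - real k - 1) * (s - y) powr (C - real i + real k)
         - (C - real i + real k) * y powr (A - real k) * (s - y) powr (C - real i + real k - 1)))) (at y)"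
    unfolding rodrigues_deriv_def[abs_def]
    by (intro DERIV_sum DERIV_cmult has_real_derivative_powr_mult_powr assms)
  also have "(\<Sum>k\<le>i. ?c k * ((A - real k) * y powr (A - real k - 1) * (s - y) powr (C - real i + real k)
         - (C - real i + real k) * y powr (A - real k) * (s - y) powr (C - real i + real k - 1)))
     = (\<Sum>k\<le>i. ?c k * (A - real k) * ?e (Suc k) (Suc i)) - (\<Sum>k\<le>i. ?c k * (C - real i + real k) * ?e k (Suc i))"
    unfolding sum_subtractf[symmetric]
  proof (intro sum.cong refl)
    fix k
    have "A - real k - 1 = A - real (Suc k)" "C - real i + real k = C - real (Suc i) + real (Suc k)"
      "C - real i + real k - 1 = C - real (Suc i) + real k" by simp_all
    then show "?c k * ((A - real k) * y powr (A - real k - 1) * (s - y) powr (C - real i + real k)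
         - (C - real i + real k) * y powr (A - real k) * (s - y) powr (C - real i + real k - 1))
       = ?c k * (A - real k) * ?e (Suc k) (Suc i) - ?c k * (C - real i + real k) * ?e k (Suc i)"
      by (simp only:) (simp add: algebra_simps)
  qed
  also have "(\<Sum>k\<le>i. ?c k * (A - real k) * ?e (Suc k) (Suc i))
     = (\<Sum>k\<le>Suc i. (if k = 0 then 0 else ?c (k - 1) * (A - real (k - 1))) * ?e k (Suc i))"
    by (subst sum.atMost_Suc_shift) (simp del: sum.atMost_Suc)
  also have "(\<Sum>k\<le>i. ?c k * (C - real i + real k) * ?e k (Suc i))
     = (\<Sum>k\<le>Suc i. ?c k * (C - real i + real k) * ?e k (Suc i))"
    by (simp add: rodrigues_coeff_eq_0)
  also have "(\<Sum>k\<le>Suc i. (if k = 0 then 0 else ?c (k - 1) * (A - real (k - 1))) * ?e k (Suc i))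
      - (\<Sum>k\<le>Suc i. ?c k * (C - real i + real k) * ?e k (Suc i)) = rodrigues_deriv A C s (Suc i) y"
    unfolding rodrigues_deriv_def
    by (simp only: sum_subtractf[symmetric] rodrigues_coeff.simps(2) left_diff_distrib)
  finally show ?thesis .
qed

lemma rodrigues_deriv_eq:
  assumes "0 < y" "y < s"
  shows "rodrigues_deriv A C s i y = y powr (A - real i) * (s - y) powr (C - real i) *
     (\<Sum>k\<le>i. rodrigues_coeff A C i k * y ^ (i - k) * (s - y) ^ k)"
  unfolding rodrigues_deriv_def sum_distrib_left
proof (rule sum.cong[OF refl])
  fix k assume k: "k \<in> {..i}"
  have "y powr (A - real k) = y powr (A - real i) * y ^ (i - k)"
    using k assms by (simp add: powr_realpow[symmetric] powr_add[symmetric])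
  moreover have "(s - y) powr (C - real i + real k) = (s - y) powr (C - real i) * (s - y) ^ k"
    using assms by (simp add: powr_realpow[symmetric] powr_add[symmetric])
  ultimately show "rodrigues_coeff A C i k * (y powr (A - real k) * (s - y) powr (C - real i + real k)) =
      y powr (A - real i) * (s - y) powr (C - real i) * (rodrigues_coeff A C i k * y ^ (i - k) * (s - y) ^ k)"
    by (simp add: algebra_simps)
qed

lemma continuous_on_rodrigues_deriv:
  assumes "A - real i > 0" "C - real i > 0"
  shows "continuous_on {0..s} (rodrigues_deriv A C s i)"
  unfolding rodrigues_deriv_def[abs_def]
  by (intro continuous_intros continuous_on_powr') (use assms in auto)

text \<open>Integration by parts n times. Since \<open>0 powr _ = 0\<close>, the boundary terms vanish
  identically; it is the continuity of the lower derivatives (positive exponents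
  \<open>b + j\<close>, \<open>c + j\<close> for \<open>j \<ge> 1\<close>) that makes the fundamental theorem applicable.\<close>

lemma rodrigues_deriv_orthogonal:
  assumes s: "s > 0" and b: "b > -1" and c: "c > -1" and q: "degree q < n"
  shows "((\<lambda>y. poly q y * rodrigues_deriv (b + real n) (c + real n) s n y) has_integral 0) {0..s}"
proof -
  define D where "D = rodrigues_deriv (b + real n) (c + real n) s"
  define F where "F y = (\<Sum>j<n. (-1) ^ j * poly ((pderiv ^^ j) q) y * D (n - Suc j) y)" for y
  have cont: "continuous_on {0..s} F"
    unfolding F_def[abs_def] D_def
  proof (intro continuous_intros continuous_on_rodrigues_deriv)
    fix j assume "j \<in> {..<n}"
    then show "b + real n - real (n - Suc j) > 0" "c + real n - real (n - Suc j) > 0"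
      using b c by (auto simp:)
  qed
  have deriv: "(F has_real_derivative poly q y * D n y) (at y)" if y: "y \<in> {0<..<s}" for y
  proof -
    define T where "T j = (-1) ^ j * poly ((pderiv ^^ j) q) y * D (n - j) y" for j
    have "(F has_real_derivative (\<Sum>j<n. (-1) ^ j * (poly ((pderiv ^^ j) q) y * D (Suc (n - Suc j)) y
         + poly (pderiv ((pderiv ^^ j) q)) y * D (n - Suc j) y))) (at y)"
      unfolding F_def[abs_def] D_def mult.assoc
      by (intro DERIV_sum DERIV_cmult DERIV_mult' poly_DERIV rodrigues_deriv_has_real_derivative)
         (use y in auto)
    also have "(\<Sum>j<n. (-1) ^ j * (poly ((pderiv ^^ j) q) y * D (Suc (n - Suc j)) y
         + poly (pderiv ((pderiv ^^ j) q)) y * D (n - Suc j) y)) = (\<Sum>j<n. T j - T (Suc j))"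
      by (intro sum.cong refl) (auto simp: T_def Suc_diff_Suc algebra_simps)
    also have "\<dots> = T 0 - T n" by (rule sum_lessThan_telescope')
    also have "\<dots> = poly q y * D n y" using higher_pderiv_eq_0[OF q] by (simp add: T_def)
    finally show ?thesis .
  qed
  have "((\<lambda>y. poly q y * D n y) has_integral (F s - F 0)) {0..s}"
    by (rule fundamental_theorem_of_calculus_interior)
       (use s cont deriv in \<open>auto simp: has_real_derivative_iff_has_vector_derivative[symmetric]\<close>)
  moreover have "F s = 0" "F 0 = 0" by (simp_all add: F_def D_def rodrigues_deriv_def)
  ultimately show ?thesis by (simp add: D_def)
qed

section \<open>The Rodrigues polynomial on the triangle\<close>

definition rodrigues_poly :: "real \<Rightarrow> real \<Rightarrow> nat \<Rightarrow> real \<times> real \<Rightarrow> real" where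
  "rodrigues_poly A C n z =
     (\<Sum>k\<le>n. rodrigues_coeff A C n k * snd z ^ (n - k) * (1 - fst z - snd z) ^ k)"

lemma rodrigues_deriv_eq_rodrigues_poly:
  assumes "0 < y" "y < 1 - x"
  shows "rodrigues_deriv (b + real n) (c + real n) (1 - x) n y =
           y powr b * (1 - x - y) powr c * rodrigues_poly (b + real n) (c + real n) n (x, y)"
  using rodrigues_deriv_eq[OF assms, of "b + real n" "c + real n" n] by (simp add: rodrigues_poly_def)

lemma Ptri_0_eq_rodrigues_poly:
  assumes "(x, y) \<in> tri_int"
  shows "Ptri a b c 0 n (x, y) = rodrigues_poly (b + real n) (c + real n) n (x, y)"
proof -
  from assms have x: "0 < x" and y: "0 < y" "y < 1 - x" by (auto simp: tri_int_def)
  define D where "D = rodrigues_deriv (b + real n) (c + real n) (1 - x)"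
  have "(deriv ^^ n) (\<lambda>t. x powr a * t powr (b + real n) * (1 - x - t) powr (c + real n)) y
      = x powr a * D n y"
    by (rule higher_deriv_eq_on_interval[where lo = 0 and hi = "1 - x"])
       (use y in \<open>auto simp: D_def rodrigues_deriv_0 intro!: DERIV_cmult rodrigues_deriv_has_real_derivative\<close>)
  then show ?thesis
    using x y rodrigues_deriv_eq_rodrigues_poly[OF y, of b n c]
    by (simp add: Ptri_def funpow_pdy_eq W_def D_def)
qed

lemma Jac_eq_rodrigues_poly:
  assumes "0 < y" "y < 1"
  shows "Jac n c b y = rodrigues_poly (b + real n) (c + real n) n (0, y)"
proof -
  have "(deriv ^^ n) (\<lambda>s. (1 - s) powr (real n + c) * s powr (real n + b)) y
      = rodrigues_deriv (b + real n) (c + real n) 1 n y"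
    by (rule higher_deriv_eq_on_interval[where lo = 0 and hi = 1])
       (use assms in \<open>auto simp: rodrigues_deriv_0 algebra_simps intro!: rodrigues_deriv_has_real_derivative\<close>)
  then show ?thesis
    using assms rodrigues_deriv_eq_rodrigues_poly[of y 0 b n c]
    by (simp add: Jac_def powr_minus field_simps)
qed

lemma is_poly2_rodrigues_poly: "is_poly2 n (rodrigues_poly A C n)"
proof -
  have "is_poly2 n (\<lambda>z. \<Sum>k\<le>n. rodrigues_coeff A C n k * (snd z ^ (n - k) * (1 - fst z - snd z) ^ k))"
  proof (intro is_poly2_sum is_poly2_cmult finite_atMost)
    fix k assume "k \<in> {..n}"
    then show "is_poly2 n (\<lambda>z. snd z ^ (n - k) * (1 - fst z - snd z) ^ k)"
      using is_poly2_mult[OF is_poly2_power[OF is_poly2_snd] is_poly2_power[OF is_poly2_one_minus_fst_snd],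
          of "n - k" k]
      by simp
  qed
  then show ?thesis by (simp add: rodrigues_poly_def[abs_def] mult.assoc)
qed

section \<open>Integration over the triangle\<close>

lemma tri_eq: "tri = {z. 0 \<le> fst z} \<inter> {z. 0 \<le> snd z} \<inter> {z. fst z + snd z \<le> 1}"
  by (auto simp: tri_def)

lemma closed_tri: "closed tri"
  unfolding tri_eq by (intro closed_Int closed_Collect_le continuous_intros)

lemma compact_tri: "compact tri"
proof -
  have "tri \<subseteq> {0..1} \<times> {0..1}" by (auto simp: tri_def)
  then have "bounded tri"
    by (rule bounded_subset[OF bounded_Times[OF bounded_closed_interval bounded_closed_interval]])
  then show ?thesis using closed_tri by (simp add: compact_eq_bounded_closed)
qed

lemma sets_borel_tri [measurable]: "tri \<in> sets borel"
  by (rule borel_closed[OF closed_tri])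

lemma W_eq: "W a b c z = fst z powr a * snd z powr b * (1 - fst z - snd z) powr c"
  by (simp add: W_def split: prod.splits)

lemma W_nonneg: "W a b c z \<ge> 0"
  by (simp add: W_eq)

lemma borel_measurable_W [measurable]: "W a b c \<in> borel_measurable borel"
proof -
  have "W a b c \<in> borel_measurable (lborel \<Otimes>\<^sub>M lborel)"
    unfolding W_eq[abs_def] by measurable
  then show ?thesis by (simp add: lborel_prod)
qed

lemma beta_integral_interval:
  fixes s b c :: real
  assumes s: "s > 0" and b: "b > -1" and c: "c > -1"
  shows "integrable lborel (\<lambda>y. indicator {0..s} y * (y powr b * (s - y) powr c))"
    and "(\<integral>y. indicator {0..s} y * (y powr b * (s - y) powr c) \<partial>lborel) =
           s powr (b + c + 1) * Beta (b + 1) (c + 1)"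
proof -
  define f where "f y = indicator {0..s} y * (y powr b * (s - y) powr c)" for y :: real
  define g where "g t = indicator {0..1} t * (t powr b * (1 - t) powr c)" for t :: real
  have B: "set_integrable lborel {0..1} (\<lambda>t. t powr (b + 1 - 1) * (1 - t) powr (c + 1 - 1))"
    by (rule integrable_Beta) (use b c in auto)
  then have g_int: "integrable lborel g"
    by (simp add: set_integrable_def g_def[abs_def])
  have "integral\<^sup>L lborel g = integral {0..1} (\<lambda>t. t powr (b + 1 - 1) * (1 - t) powr (c + 1 - 1))"
    using set_borel_integral_eq_integral(2)[OF B] by (simp add: set_lebesgue_integral_def g_def[abs_def])
  also have "\<dots> = Beta (b + 1) (c + 1)"
    by (rule integral_unique[OF has_integral_Beta_real]) (use b c in auto)
  finally have g_val: "integral\<^sup>L lborel g = Beta (b + 1) (c + 1)" .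
  have f_scaled: "f (0 + s * t) = s powr (b + c) * g t" for t
  proof (cases "t \<in> {0..1}")
    case True
    then have "s * t \<in> {0..s}" using s by (auto simp: mult_le_cancel_left1)
    moreover have "s - s * t = s * (1 - t)" by (simp add: algebra_simps)
    ultimately show ?thesis using True s by (simp add: f_def g_def powr_mult powr_add)
  next
    case False
    then have "s * t \<notin> {0..s}" using s by (auto simp: mult_le_cancel_left1 zero_le_mult_iff)
    then show ?thesis using False by (simp add: f_def g_def)
  qed
  have "integrable lborel (\<lambda>t. f (0 + s * t))"
    unfolding f_scaled by (intro integrable_mult_right g_int)
  then show "integrable lborel (\<lambda>y. indicator {0..s} y * (y powr b * (s - y) powr c))"
    using lborel_integrable_real_affine_iff[of s f 0] s by (simp add: f_def[abs_def])
  have "integral\<^sup>L lborel f = s * (\<integral>t. f (0 + s * t) \<partial>lborel)"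
    using lborel_integral_real_affine[of s f 0] s by simp
  also have "\<dots> = s powr (b + c + 1) * Beta (b + 1) (c + 1)"
    unfolding f_scaled using s g_val by (simp add: powr_add)
  finally show "(\<integral>y. indicator {0..s} y * (y powr b * (s - y) powr c) \<partial>lborel) =
      s powr (b + c + 1) * Beta (b + 1) (c + 1)"
    by (simp add: f_def[abs_def])
qed

lemma indicator_tri_mult_W:
  "indicator tri (x, y) * W a b c (x, y) =
     indicator {0<..<1} x * x powr a * (indicator {0..1 - x} y * (y powr b * ((1 - x) - y) powr c))"
proof (cases "0 < x \<and> x < 1")
  case True
  then show ?thesis by (auto simp: indicator_def tri_def W_def)
next
  case False
  then have "(x, y) \<in> tri \<Longrightarrow> x = 0 \<or> (x = 1 \<and> y = 0)" by (auto simp: tri_def)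
  with False show ?thesis by (auto simp: indicator_def W_def)
qed

lemma set_integrable_W:
  assumes a: "a > -1" and b: "b > -1" and c: "c > -1"
  shows "set_integrable lborel tri (W a b c)"
proof -
  have "integrable (lborel \<Otimes>\<^sub>M lborel) (\<lambda>z. indicator tri z * W a b c z)"
  proof (rule lborel_pair.Fubini_integrable)
    show "(\<lambda>z. indicator tri z * W a b c z) \<in> borel_measurable (lborel \<Otimes>\<^sub>M lborel)"
      unfolding lborel_prod by measurable
    have "integrable lborel (\<lambda>y. indicator tri (x, y) * W a b c (x, y))" for x
      unfolding indicator_tri_mult_W using beta_integral_interval(1)[of "1 - x" b c] b c
      by (cases "0 < x \<and> x < 1") auto
    then show "AE x in lborel. integrable lborel (\<lambda>y. indicator tri (x, y) * W a b c (x, y))"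
      by simp
    have slice: "(\<integral>y. norm (indicator tri (x, y) * W a b c (x, y)) \<partial>lborel) =
        Beta (b + 1) (c + 1) * (indicator {0..1} x * (x powr (a + 1 - 1) * (1 - x) powr (b + c + 2 - 1)))"
      for x
    proof (cases "0 < x \<and> x < 1")
      case True
      have "(\<integral>y. norm (indicator tri (x, y) * W a b c (x, y)) \<partial>lborel) =
          (\<integral>y. indicator {0<..<1} x * x powr a * (indicator {0..1 - x} y * (y powr b * ((1 - x) - y) powr c)) \<partial>lborel)"
        by (intro Bochner_Integration.integral_cong refl) (simp add: W_nonneg indicator_tri_mult_W[symmetric])
      also have "\<dots> = indicator {0<..<1} x * x powr a * ((1 - x) powr (b + c + 1) * Beta (b + 1) (c + 1))"
        using beta_integral_interval(2)[of "1 - x" b c] True b c by simp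
      finally show ?thesis using True by (simp add: indicator_def algebra_simps)
    next
      case False
      then show ?thesis by (simp only: indicator_tri_mult_W) (auto simp: indicator_def)
    qed
    have "set_integrable lborel {0..1} (\<lambda>t. t powr (a + 1 - 1) * (1 - t) powr (b + c + 2 - 1))"
      by (rule integrable_Beta) (use a b c in auto)
    then show "integrable lborel (\<lambda>x. \<integral>y. norm (indicator tri (x, y) * W a b c (x, y)) \<partial>lborel)"
      unfolding slice set_integrable_def by (intro integrable_mult_right) simp
  qed
  then show ?thesis by (simp add: set_integrable_def lborel_prod)
qed

lemma set_integrable_tri_mult_W:
  assumes "a > -1" "b > -1" "c > -1" and g: "continuous_on tri g"
  shows "set_integrable lborel tri (\<lambda>z. g z * W a b c z)"
proof -
  obtain M where M: "\<And>z. z \<in> tri \<Longrightarrow> norm (g z) \<le> M"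
    using compact_imp_bounded[OF compact_continuous_image[OF g compact_tri]]
    unfolding bounded_iff by blast
  have "set_integrable lborel tri (\<lambda>z. M * W a b c z)"
    using set_integrable_W[OF assms(1-3)] by simp
  moreover have "(\<lambda>z. indicator tri z *\<^sub>R g z) \<in> borel_measurable borel"
    by (rule borel_measurable_continuous_on_indicator[OF sets_borel_tri g])
  then have "set_borel_measurable lborel tri (\<lambda>z. g z * W a b c z)"
    unfolding set_borel_measurable_def by (simp add: mult.assoc[symmetric])
  moreover have "AE z in lborel. z \<in> tri \<longrightarrow> norm (g z * W a b c z) \<le> norm (M * W a b c z)"
  proof (intro AE_I2 impI)
    fix z assume "z \<in> tri"
    then have "\<bar>g z\<bar> \<le> \<bar>M\<bar>" using M[of z] by simp
    then show "norm (g z * W a b c z) \<le> norm (M * W a b c z)"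
      by (simp add: abs_mult W_nonneg mult_right_mono)
  qed
  ultimately show ?thesis by (rule set_integrable_bound)
qed

lemma has_integral_iff_set_lebesgue_integral:
  fixes f :: "'a::euclidean_space \<Rightarrow> real"
  assumes "set_integrable lborel S f"
  shows "(f has_integral I) S \<longleftrightarrow> (LINT z:S|lborel. f z) = I"
  using set_borel_integral_eq_integral[OF assms] by auto

lemma has_integral_tri_0_by_slices:
  fixes f :: "real \<times> real \<Rightarrow> real"
  assumes f: "set_integrable lborel tri f"
    and slices: "\<And>x. 0 < x \<Longrightarrow> x < 1 \<Longrightarrow> ((\<lambda>y. f (x, y)) has_integral 0) {0..1 - x}"
  shows "(f has_integral 0) tri"
proof -
  let ?G = "\<lambda>z. indicator tri z * f z"
  have G: "integrable (lborel \<Otimes>\<^sub>M lborel) ?G"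
    using f by (simp add: set_integrable_def lborel_prod)
  have slice_0: "(\<integral>y. ?G (x, y) \<partial>lborel) = 0"
    if x: "x \<noteq> 0" "x \<noteq> 1" and int: "integrable lborel (\<lambda>y. ?G (x, y))" for x
  proof (cases "0 < x \<and> x < 1")
    case True
    then have G_eq: "?G (x, y) = indicator {0..1 - x} y * f (x, y)" for y
      by (simp add: indicator_def tri_def)
    have slice_int: "set_integrable lborel {0..1 - x} (\<lambda>y. f (x, y))"
      using int unfolding set_integrable_def G_eq by simp
    have "(\<integral>y. ?G (x, y) \<partial>lborel) = integral {0..1 - x} (\<lambda>y. f (x, y))"
      using set_borel_integral_eq_integral(2)[OF slice_int] by (simp add: G_eq set_lebesgue_integral_def)
    also have "\<dots> = 0"
      using slices True by (simp add: integral_unique)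
    finally show ?thesis .
  next
    case False
    with x have "(\<lambda>y. ?G (x, y)) = (\<lambda>_. 0)" by (auto simp: tri_def)
    then show ?thesis by simp
  qed
  have "AE x in lborel. (\<integral>y. ?G (x, y) \<partial>lborel) = 0"
    using AE_lborel_singleton[of 0] AE_lborel_singleton[of 1] lborel_pair.AE_integrable_fst'[OF G]
    by eventually_elim (rule slice_0)
  then have "(\<integral>x. (\<integral>y. ?G (x, y) \<partial>lborel) \<partial>lborel) = 0"
    by (rule integral_eq_zero_AE)
  then have "(LINT z:tri|lborel. f z) = 0"
    using lborel_pair.integral_fst'[OF G] by (simp add: set_lebesgue_integral_def lborel_prod)
  then show ?thesis
    using has_integral_iff_set_lebesgue_integral[OF f] by simp
qed

lemma
  fixes F :: "real \<times> real \<Rightarrow> real"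
  assumes F: "integrable (lborel \<Otimes>\<^sub>M lborel) F" and h[measurable]: "h \<in> borel_measurable lborel"
  shows integrable_reflect_snd: "integrable (lborel \<Otimes>\<^sub>M lborel) (\<lambda>z. F (fst z, h (fst z) - snd z))"
    and integral_reflect_snd: "integral\<^sup>L (lborel \<Otimes>\<^sub>M lborel) (\<lambda>z. F (fst z, h (fst z) - snd z)) =
           integral\<^sup>L (lborel \<Otimes>\<^sub>M lborel) F"
proof -
  have [measurable]: "F \<in> borel_measurable (lborel \<Otimes>\<^sub>M lborel)"
    by (rule borel_measurable_integrable[OF F])
  have reflect: "(\<lambda>y. g (c - y)) = (\<lambda>y. g (c + (-1) * y))" for g :: "real \<Rightarrow> real" and c :: real
    by simp
  have integrable_iff: "integrable lborel (\<lambda>y. g (c - y)) \<longleftrightarrow> integrable lborel g"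
    for g :: "real \<Rightarrow> real" and c :: real
    unfolding reflect by (rule lborel_integrable_real_affine_iff) simp
  have integral_eq: "(\<integral>y. g (c - y) \<partial>lborel) = (\<integral>u. g u \<partial>lborel)"
    for g :: "real \<Rightarrow> real" and c :: real
    using lborel_integral_real_affine[of "-1" g c] unfolding reflect by simp
  show int: "integrable (lborel \<Otimes>\<^sub>M lborel) (\<lambda>z. F (fst z, h (fst z) - snd z))"
  proof (rule lborel_pair.Fubini_integrable)
    show "(\<lambda>z. F (fst z, h (fst z) - snd z)) \<in> borel_measurable (lborel \<Otimes>\<^sub>M lborel)"
      by measurable
    show "integrable lborel (\<lambda>x. \<integral>y. norm (F (fst (x, y), h (fst (x, y)) - snd (x, y))) \<partial>lborel)"
      using lborel_pair.integrable_fst'[OF integrable_norm[OF F]]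
        integral_eq[of "\<lambda>u. norm (F (_, u))"] by simp
    show "AE x in lborel. integrable lborel (\<lambda>y. F (fst (x, y), h (fst (x, y)) - snd (x, y)))"
      using lborel_pair.AE_integrable_fst'[OF F]
      by (rule AE_mp) (use integrable_iff[of "\<lambda>u. F (_, u)"] in auto)
  qed
  have "integral\<^sup>L (lborel \<Otimes>\<^sub>M lborel) (\<lambda>z. F (fst z, h (fst z) - snd z))
      = (\<integral>x. (\<integral>u. F (x, u) \<partial>lborel) \<partial>lborel)"
    using lborel_pair.integral_fst'[OF int, symmetric] integral_eq[of "\<lambda>u. F (_, u)"] by simp
  also have "\<dots> = integral\<^sup>L (lborel \<Otimes>\<^sub>M lborel) F"
    by (rule lborel_pair.integral_fst'[OF F])
  finally show "integral\<^sup>L (lborel \<Otimes>\<^sub>M lborel) (\<lambda>z. F (fst z, h (fst z) - snd z)) =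
      integral\<^sup>L (lborel \<Otimes>\<^sub>M lborel) F" .
qed

lemma
  fixes F :: "real \<times> real \<Rightarrow> real"
  assumes F: "integrable (lborel \<Otimes>\<^sub>M lborel) F"
  shows integrable_swap: "integrable (lborel \<Otimes>\<^sub>M lborel) (\<lambda>z. F (snd z, fst z))"
    and integral_swap: "integral\<^sup>L (lborel \<Otimes>\<^sub>M lborel) (\<lambda>z. F (snd z, fst z)) =
           integral\<^sup>L (lborel \<Otimes>\<^sub>M lborel) F"
proof -
  have swap: "(\<lambda>z. F (snd z, fst z)) = (\<lambda>(x, y). F (y, x))" by auto
  show "integrable (lborel \<Otimes>\<^sub>M lborel) (\<lambda>z. F (snd z, fst z))"
    unfolding swap by (rule lborel_pair.integrable_product_swap[OF F])
  show "integral\<^sup>L (lborel \<Otimes>\<^sub>M lborel) (\<lambda>z. F (snd z, fst z)) = integral\<^sup>L (lborel \<Otimes>\<^sub>M lborel) F"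
    unfolding swap by (rule lborel_pair.integral_product_swap[OF borel_measurable_integrable[OF F]])
qed

lemma indicator_tri_swap: "indicator tri (y, x) = (indicator tri (x, y) :: real)"
  by (auto simp: indicator_def tri_def)

lemma indicator_tri_reflect: "indicator tri (1 - x - y, y) = (indicator tri (x, y) :: real)"
  by (auto simp: indicator_def tri_def)

lemma set_integral_tri_swap:
  fixes f :: "real \<times> real \<Rightarrow> real"
  assumes "set_integrable lborel tri f"
  shows "set_integrable lborel tri (\<lambda>z. f (snd z, fst z)) \<and>
         (LINT z:tri|lborel. f (snd z, fst z)) = (LINT z:tri|lborel. f z)"
proof -
  let ?G = "\<lambda>z. indicator tri z * f z"
  have G: "integrable (lborel \<Otimes>\<^sub>M lborel) ?G"
    using assms by (simp add: set_integrable_def lborel_prod)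
  have "(\<lambda>z. ?G (snd z, fst z)) = (\<lambda>z. indicator tri z * f (snd z, fst z))"
    by (simp add: indicator_tri_swap)
  then show ?thesis
    using integrable_swap[OF G] integral_swap[OF G]
    by (simp add: set_integrable_def set_lebesgue_integral_def lborel_prod)
qed

lemma set_integral_tri_reflect:
  fixes f :: "real \<times> real \<Rightarrow> real"
  assumes "set_integrable lborel tri f"
  shows "set_integrable lborel tri (\<lambda>z. f (1 - fst z - snd z, snd z)) \<and>
         (LINT z:tri|lborel. f (1 - fst z - snd z, snd z)) = (LINT z:tri|lborel. f z)"
proof -
  let ?G = "\<lambda>z. indicator tri z * f z"
  let ?H = "\<lambda>z. ?G (snd z, fst z)"
  let ?K = "\<lambda>z. ?H (fst z, 1 - fst z - snd z)"
  have G: "integrable (lborel \<Otimes>\<^sub>M lborel) ?G"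
    using assms by (simp add: set_integrable_def lborel_prod)
  have H: "integrable (lborel \<Otimes>\<^sub>M lborel) ?H"
    by (rule integrable_swap[OF G])
  have K: "integrable (lborel \<Otimes>\<^sub>M lborel) ?K"
    using integrable_reflect_snd[OF H, of "\<lambda>x. 1 - x"] by (simp add: diff_diff_eq)
  have "integral\<^sup>L (lborel \<Otimes>\<^sub>M lborel) (\<lambda>z. ?K (snd z, fst z)) = integral\<^sup>L (lborel \<Otimes>\<^sub>M lborel) ?G"
    using integral_swap[OF K] integral_reflect_snd[OF H, of "\<lambda>x. 1 - x"] integral_swap[OF G]
    by (simp add: diff_diff_eq)
  moreover have "(\<lambda>z. ?K (snd z, fst z)) = (\<lambda>z. indicator tri z * f (1 - fst z - snd z, snd z))"
  proof
    fix z :: "real \<times> real"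
    obtain x y where z: "z = (x, y)" by fastforce
    show "?K (snd z, fst z) = indicator tri z * f (1 - fst z - snd z, snd z)"
      using indicator_tri_reflect[of x y] by (simp add: z algebra_simps)
  qed
  ultimately show ?thesis
    using integrable_swap[OF K]
    by (simp add: set_integrable_def set_lebesgue_integral_def lborel_prod)
qed

section \<open>Orthogonality\<close>

lemma set_integrable_tri_poly2_W:
  assumes "a > -1" "b > -1" "c > -1" "is_poly2 m p" "is_poly2 k Q"
  shows "set_integrable lborel tri (\<lambda>z. p z * Q z * W a b c z)"
  using assms by (intro set_integrable_tri_mult_W continuous_intros continuous_on_is_poly2)

lemma in_V2_rodrigues_poly:
  assumes a: "a > -1" and b: "b > -1" and c: "c > -1"
  shows "in_V2 a b c n (rodrigues_poly (b + real n) (c + real n) n)"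
  unfolding in_V2_def
proof (intro conjI allI impI is_poly2_rodrigues_poly)
  fix m Q assume "m < n" and Q: "is_poly2 m Q"
  let ?R = "rodrigues_poly (b + real n) (c + real n) n"
  show "((\<lambda>z. ?R z * Q z * W a b c z) has_integral 0) tri"
  proof (rule has_integral_tri_0_by_slices)
    show "set_integrable lborel tri (\<lambda>z. ?R z * Q z * W a b c z)"
      using a b c is_poly2_rodrigues_poly Q by (rule set_integrable_tri_poly2_W)
  next
    fix x :: real assume x: "0 < x" "x < 1"
    obtain q where "degree q \<le> m" and q: "\<And>y. Q (x, y) = poly q y"
      using is_poly2_slice[OF Q] by blast
    with \<open>m < n\<close> have "degree q < n" by simp
    then have "((\<lambda>y. x powr a * (poly q y * rodrigues_deriv (b + real n) (c + real n) (1 - x) n y))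
        has_integral 0) {0..1 - x}"
      using has_integral_mult_right[OF rodrigues_deriv_orthogonal, of "1 - x" b c q n "x powr a"] x b c
      by simp
    then show "((\<lambda>y. ?R (x, y) * Q (x, y) * W a b c (x, y)) has_integral 0) {0..1 - x}"
    proof (rule has_integral_spike_finite[where S = "{0, 1 - x}", rotated 2], simp_all)
      fix y assume "0 \<le> y \<and> y \<le> 1 - x \<and> y \<noteq> 0 \<and> y \<noteq> 1 - x"
      then have "0 < y" "y < 1 - x" by auto
      then show "?R (x, y) * Q (x, y) * W a b c (x, y) =
          x powr a * (poly q y * rodrigues_deriv (b + real n) (c + real n) (1 - x) n y)"
        by (simp add: rodrigues_deriv_eq_rodrigues_poly q W_def)
    qed
  qed
qed

lemma in_V2_transfer:
  assumes V: "in_V2 a' b' c' n p" and "a' > -1" "b' > -1" "c' > -1"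
    and poly_compose: "\<And>m q. is_poly2 m q \<Longrightarrow> is_poly2 m (\<lambda>z. q (\<sigma> z))"
    and involution: "\<And>z. \<sigma> (\<sigma> z) = z"
    and weight: "\<And>z. W a' b' c' (\<sigma> z) = W a b c z"
    and set_integral: "\<And>f :: real \<times> real \<Rightarrow> real. set_integrable lborel tri f \<Longrightarrow>
          set_integrable lborel tri (\<lambda>z. f (\<sigma> z)) \<and>
          (LINT z:tri|lborel. f (\<sigma> z)) = (LINT z:tri|lborel. f z)"
  shows "in_V2 a b c n (\<lambda>z. p (\<sigma> z))"
  unfolding in_V2_def
proof (intro conjI allI impI)
  show "is_poly2 n (\<lambda>z. p (\<sigma> z))"
    using V by (intro poly_compose) (simp add: in_V2_def)
  fix m Q assume "m < n" and Q: "is_poly2 m Q"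
  define f where "f z = p z * Q (\<sigma> z) * W a' b' c' z" for z
  have f_int: "set_integrable lborel tri f"
    unfolding f_def using assms(2-4) V poly_compose[OF Q]
    by (intro set_integrable_tri_poly2_W) (auto simp: in_V2_def)
  have "(f has_integral 0) tri"
    using V \<open>m < n\<close> poly_compose[OF Q] unfolding in_V2_def f_def by blast
  then have "(LINT z:tri|lborel. f z) = 0"
    using has_integral_iff_set_lebesgue_integral[OF f_int] by simp
  moreover have "f (\<sigma> z) = p (\<sigma> z) * Q z * W a b c z" for z
    by (simp add: f_def involution weight)
  ultimately have "set_integrable lborel tri (\<lambda>z. p (\<sigma> z) * Q z * W a b c z)"
      and "(LINT z:tri|lborel. p (\<sigma> z) * Q z * W a b c z) = 0"
    using set_integral[OF f_int] by simp_all
  then show "((\<lambda>z. p (\<sigma> z) * Q z * W a b c z) has_integral 0) tri"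
    using has_integral_iff_set_lebesgue_integral by blast
qed

lemma in_V2_swap:
  assumes "in_V2 b a c n p" "a > -1" "b > -1" "c > -1"
  shows "in_V2 a b c n (\<lambda>z. p (snd z, fst z))"
  using assms(1,3,2,4)
proof (rule in_V2_transfer)
  show "is_poly2 m (\<lambda>z. q (snd z, fst z))" if "is_poly2 m q" for m q
    using that is_poly2_snd is_poly2_fst by (rule is_poly2_compose)
  show "W b a c (snd z, fst z) = W a b c z" for z
    by (cases z) (simp add: W_def algebra_simps)
  show "set_integrable lborel tri (\<lambda>z. f (snd z, fst z)) \<and>
      (LINT z:tri|lborel. f (snd z, fst z)) = (LINT z:tri|lborel. f z)"
    if "set_integrable lborel tri f" for f :: "real \<times> real \<Rightarrow> real"
    using that by (rule set_integral_tri_swap)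
qed simp

lemma in_V2_reflect:
  assumes "in_V2 c b a n p" "a > -1" "b > -1" "c > -1"
  shows "in_V2 a b c n (\<lambda>z. p (1 - fst z - snd z, snd z))"
  using assms(1,4,3,2)
proof (rule in_V2_transfer)
  show "is_poly2 m (\<lambda>z. q (1 - fst z - snd z, snd z))" if "is_poly2 m q" for m q
    using that is_poly2_one_minus_fst_snd is_poly2_snd by (rule is_poly2_compose)
  show "W c b a (1 - fst z - snd z, snd z) = W a b c z" for z
    by (cases z) (simp add: W_def mult_ac)
  show "set_integrable lborel tri (\<lambda>z. f (1 - fst z - snd z, snd z)) \<and>
      (LINT z:tri|lborel. f (1 - fst z - snd z, snd z)) = (LINT z:tri|lborel. f z)"
    if "set_integrable lborel tri f" for f :: "real \<times> real \<Rightarrow> real"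
    using that by (rule set_integral_tri_reflect)
qed simp

theorem proposition2p1:
  fixes \<alpha> \<beta> \<gamma> :: real and n :: nat
  assumes "\<alpha> > -1" and "\<beta> > -1" and "\<gamma> > -1"
  shows "(\<exists>p. in_V2 \<alpha> \<beta> \<gamma> n p
            \<and> (\<forall>x y. (x, y) \<in> tri_int \<longrightarrow> Ptri \<alpha> \<beta> \<gamma> 0 n (x, y) = p (x, y))
            \<and> (\<forall>y. 0 < y \<and> y < 1 \<longrightarrow> p (0, y) = Jac n \<gamma> \<beta> y))
       \<and> (\<exists>p. in_V2 \<alpha> \<beta> \<gamma> n p
            \<and> (\<forall>x y. (x, y) \<in> tri_int \<longrightarrow> Ptri \<beta> \<alpha> \<gamma> 0 n (y, x) = p (x, y))
            \<and> (\<forall>x. 0 < x \<and> x < 1 \<longrightarrow> p (x, 0) = Jac n \<gamma> \<alpha> x))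
       \<and> (\<exists>p. in_V2 \<alpha> \<beta> \<gamma> n p
            \<and> (\<forall>x y. (x, y) \<in> tri_int \<longrightarrow> Ptri \<gamma> \<beta> \<alpha> 0 n (1 - x - y, y) = p (x, y))
            \<and> (\<forall>y. 0 < y \<and> y < 1 \<longrightarrow> p (1 - y, y) = Jac n \<alpha> \<beta> y))"
proof (intro conjI)
  let ?R = "\<lambda>b c. rodrigues_poly (b + real n) (c + real n) n"
  have tri_int_swap: "(y, x) \<in> tri_int" and tri_int_reflect: "(1 - x - y, y) \<in> tri_int"
    if "(x, y) \<in> tri_int" for x y
    using that by (auto simp: tri_int_def)
  show "\<exists>p. in_V2 \<alpha> \<beta> \<gamma> n p \<and> (\<forall>x y. (x, y) \<in> tri_int \<longrightarrow> Ptri \<alpha> \<beta> \<gamma> 0 n (x, y) = p (x, y))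
      \<and> (\<forall>y. 0 < y \<and> y < 1 \<longrightarrow> p (0, y) = Jac n \<gamma> \<beta> y)"
    using assms by (intro exI[of _ "?R \<beta> \<gamma>"])
      (simp add: in_V2_rodrigues_poly Ptri_0_eq_rodrigues_poly Jac_eq_rodrigues_poly)
  show "\<exists>p. in_V2 \<alpha> \<beta> \<gamma> n p \<and> (\<forall>x y. (x, y) \<in> tri_int \<longrightarrow> Ptri \<beta> \<alpha> \<gamma> 0 n (y, x) = p (x, y))
      \<and> (\<forall>x. 0 < x \<and> x < 1 \<longrightarrow> p (x, 0) = Jac n \<gamma> \<alpha> x)"
    using assms by (intro exI[of _ "\<lambda>z. ?R \<alpha> \<gamma> (snd z, fst z)"])
      (simp add: in_V2_swap in_V2_rodrigues_poly Ptri_0_eq_rodrigues_poly Jac_eq_rodrigues_poly tri_int_swap)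
  show "\<exists>p. in_V2 \<alpha> \<beta> \<gamma> n p \<and> (\<forall>x y. (x, y) \<in> tri_int \<longrightarrow> Ptri \<gamma> \<beta> \<alpha> 0 n (1 - x - y, y) = p (x, y))
      \<and> (\<forall>y. 0 < y \<and> y < 1 \<longrightarrow> p (1 - y, y) = Jac n \<alpha> \<beta> y)"
    using assms by (intro exI[of _ "\<lambda>z. ?R \<beta> \<alpha> (1 - fst z - snd z, snd z)"])
      (simp add: in_V2_reflect in_V2_rodrigues_poly Ptri_0_eq_rodrigues_poly Jac_eq_rodrigues_poly tri_int_reflect)
qed

end
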